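(* Let $k\ge 2$ and let $\mathcal{H}=(V,E)$ be a hypergraph such that: $\mathcal{H}$ is linear and $k$-uniform; $|V|=k^2$; $|E|=k^2+1$; and there is a hyperedge $e_0\in E$ such that $\mathrm{deg}_{\mathcal{H}}(x)=k+1$ for all $x\in e_0$ and $\mathrm{deg}_{\mathcal{H}}(x)\ge k$ for all $x\in V\smallsetminus e_0$. Then (i) $\Delta([\mathcal{H}]_2)=k^2-1$ and $\delta([\mathcal{H}]_2)=k^2-k$; (ii) $k+1\le \mathrm{q}(\mathcal{H})\le 1+k\lceil k/2\rceil$; (iii) $\mathrm{q}(\mathcal{H})\le \Delta([\mathcal{H}]_2)$.
   Context: A hypergraph $\mathcal{H}=(V,E)$ has a finite vertex set $V$ and a finite set $E$ of nonempty subsets of $V$ (hyperedges). It is linear if $|e\cap e'|\le1$ for distinct hyperedges, $k$-uniform if every hyperedge has exactly $k$ elements. $\mathrm{deg}_{\mathcal{H}}(x)$ is the number of hyperedges containing $x$. The 2-section $[\mathcal{H}]_2$ is the simple graph on $V$ where distinct vertices are adjacent iff some hyperedge contains both; $\Delta([\mathcal{H}]_2)$ and $\delta([\mathcal{H}]_2)$ are its maximum and minimum degrees. The chromatic index $\mathrm{q}(\mathcal{H})$ is the least number of colors in a coloring of the hyperedges in which distinct intersecting hyperedges get different colors. *)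

theory Defs
  imports Complex_Main
begin

definition hypergraph :: "'a set \<Rightarrow> 'a set set \<Rightarrow> bool" where
  "hypergraph V E \<longleftrightarrow> finite V \<and> finite E \<and> (\<forall>e\<in>E. e \<noteq> {} \<and> e \<subseteq> V)"

definition linear_hg :: "'a set set \<Rightarrow> bool" where
  "linear_hg E \<longleftrightarrow> (\<forall>e\<in>E. \<forall>e'\<in>E. e \<noteq> e' \<longrightarrow> card (e \<inter> e') \<le> 1)"

definition uniform_hg :: "nat \<Rightarrow> 'a set set \<Rightarrow> bool" where
  "uniform_hg k E \<longleftrightarrow> (\<forall>e\<in>E. card e = k)"

definition hdeg :: "'a set set \<Rightarrow> 'a \<Rightarrow> nat" where
  "hdeg E x = card {e\<in>E. x \<in> e}"

definition sec2_nbrs :: "'a set \<Rightarrow> 'a set set \<Rightarrow> 'a \<Rightarrow> 'a set" where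
  "sec2_nbrs V E x = {y\<in>V. y \<noteq> x \<and> (\<exists>e\<in>E. x \<in> e \<and> y \<in> e)}"

definition sec2_deg :: "'a set \<Rightarrow> 'a set set \<Rightarrow> 'a \<Rightarrow> nat" where
  "sec2_deg V E x = card (sec2_nbrs V E x)"

definition sec2_maxdeg :: "'a set \<Rightarrow> 'a set set \<Rightarrow> nat" where
  "sec2_maxdeg V E = Max (sec2_deg V E ` V)"

definition sec2_mindeg :: "'a set \<Rightarrow> 'a set set \<Rightarrow> nat" where
  "sec2_mindeg V E = Min (sec2_deg V E ` V)"

definition proper_edge_coloring :: "'a set set \<Rightarrow> nat \<Rightarrow> ('a set \<Rightarrow> nat) \<Rightarrow> bool" where
  "proper_edge_coloring E n c \<longleftrightarrow> (\<forall>e\<in>E. c e < n) \<and>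
     (\<forall>e\<in>E. \<forall>e'\<in>E. e \<noteq> e' \<and> e \<inter> e' \<noteq> {} \<longrightarrow> c e \<noteq> c e')"

definition chromatic_index :: "'a set set \<Rightarrow> nat" where
  "chromatic_index E = (LEAST n. \<exists>c. proper_edge_coloring E n c)"

end

theory Submission
  imports Defs
begin

text \<open>The \<open>k\<close> pencils of edges through the points of \<open>e0\<close> are disjoint and have \<open>k\<close> edges
  each, so they exhaust \<open>E - {e0}\<close>; consequently every vertex off \<open>e0\<close> has degree exactly
  \<open>k\<close> and lies on one edge of each pencil. In a linear \<open>k\<close>-uniform hypergraph the 2-section
  degree of \<open>x\<close> is \<open>deg x * (k - 1)\<close>, which gives (i). The \<open>k + 1\<close> edges through a point of
  \<open>e0\<close> force \<open>k + 1\<close> colours. Conversely, for two distinct pencils, "being disjoint" is a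
  perfect matching between them, so two pencils can share the same \<open>k\<close> colours; pairing up
  the pencils and giving \<open>e0\<close> its own colour uses \<open>1 + k \<lceil>k/2\<rceil>\<close> colours, and this is at
  most \<open>k\<^sup>2 - 1\<close>.\<close>

lemma linear_hg_edge_unique:
  assumes "hypergraph V E" "linear_hg E" "e \<in> E" "e' \<in> E"
    and "x \<noteq> y" "x \<in> e" "y \<in> e" "x \<in> e'" "y \<in> e'"
  shows "e = e'"
proof (rule ccontr)
  assume "e \<noteq> e'"
  then have "card (e \<inter> e') \<le> 1"
    using assms(2-4) unfolding linear_hg_def by blast
  moreover have "finite (e \<inter> e')"
    using assms(1,3) unfolding hypergraph_def by (meson finite_Int finite_subset)
  then have "card {x, y} \<le> card (e \<inter> e')"
    using assms(6-9) by (intro card_mono) auto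
  ultimately show False
    using assms(5) by simp
qed

lemma linear_hg_card_Int:
  assumes "hypergraph V E" "linear_hg E" "e \<in> E" "e' \<in> E" "e \<noteq> e'" "e \<inter> e' \<noteq> {}"
  shows "card (e \<inter> e') = 1"
proof -
  have "card (e \<inter> e') \<le> 1"
    using assms(2-5) unfolding linear_hg_def by blast
  moreover have "finite (e \<inter> e')"
    using assms(1,3) unfolding hypergraph_def by (meson finite_Int finite_subset)
  ultimately show ?thesis
    using assms(6) by (simp add: le_Suc_eq)
qed

lemma sec2_deg_linear_uniform:
  assumes "hypergraph V E" "linear_hg E" "uniform_hg k E"
  shows "sec2_deg V E x = hdeg E x * (k - 1)"
proof -
  let ?Ex = "{e \<in> E. x \<in> e}"
  have fin: "finite E" "\<And>e. e \<in> E \<Longrightarrow> finite e"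
    using assms(1) unfolding hypergraph_def by (auto intro: finite_subset)
  have "sec2_nbrs V E x = (\<Union>e\<in>?Ex. e - {x})"
    using assms(1) unfolding sec2_nbrs_def hypergraph_def by auto
  moreover have "card (\<Union>e\<in>?Ex. e - {x}) = (\<Sum>e\<in>?Ex. card (e - {x}))"
  proof (rule card_UN_disjoint)
    show "\<forall>e\<in>?Ex. \<forall>e'\<in>?Ex. e \<noteq> e' \<longrightarrow> (e - {x}) \<inter> (e' - {x}) = {}"
      using linear_hg_edge_unique[OF assms(1,2)] by blast
  qed (use fin in auto)
  moreover have "card (e - {x}) = k - 1" if "e \<in> ?Ex" for e
    using that assms(3) fin unfolding uniform_hg_def by auto
  ultimately show ?thesis
    unfolding sec2_deg_def hdeg_def by simp
qed

lemma hdeg_le_colors: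
  assumes "proper_edge_coloring E n c"
  shows "hdeg E x \<le> n"
proof -
  let ?Ex = "{e \<in> E. x \<in> e}"
  have "inj_on c ?Ex"
    using assms unfolding proper_edge_coloring_def inj_on_def by blast
  then have "hdeg E x = card (c ` ?Ex)"
    unfolding hdeg_def by (simp add: card_image)
  also have "\<dots> \<le> card {0..<n}"
    using assms unfolding proper_edge_coloring_def by (intro card_mono) auto
  finally show ?thesis
    by simp
qed

lemma chromatic_index_le:
  "proper_edge_coloring E n c \<Longrightarrow> chromatic_index E \<le> n"
  unfolding chromatic_index_def by (rule Least_le) blast

lemma hdeg_le_chromatic_index:
  assumes "proper_edge_coloring E n c"
  shows "hdeg E x \<le> chromatic_index E"
proof -
  have "\<exists>c. proper_edge_coloring E (chromatic_index E) c"
    unfolding chromatic_index_def by (rule LeastI_ex) (use assms in blast)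
  then show ?thesis
    by (metis hdeg_le_colors)
qed

lemma proper_edge_coloring_insert:
  assumes "proper_edge_coloring (E - {e}) n c"
  shows "proper_edge_coloring E (Suc n) (c(e := n))"
  using assms unfolding proper_edge_coloring_def
  by (metis Diff_iff fun_upd_apply less_Suc_eq less_irrefl singletonD)

lemma proper_edge_coloring_UN:
  assumes "E \<subseteq> (\<Union>i<m. F i)" and "\<And>i. i < m \<Longrightarrow> \<exists>c. proper_edge_coloring (F i) n c"
  shows "\<exists>c. proper_edge_coloring E (n * m) c"
proof -
  obtain c where c: "\<forall>i\<in>{..<m}. proper_edge_coloring (F i) n (c i)"
    using bchoice[of "{..<m}"] assms(2) by (metis lessThan_iff)
  define cls where "cls e = (LEAST i. e \<in> F i)" for e
  have cls: "cls e < m \<and> e \<in> F (cls e)" if e: "e \<in> E" for e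
  proof -
    obtain i where "i < m" "e \<in> F i"
      using e assms(1) by blast
    then show ?thesis
      unfolding cls_def by (metis LeastI Least_le le_less_trans)
  qed
  have col: "c (cls e) e < n" if "e \<in> E" for e
    using cls[OF that] c unfolding proper_edge_coloring_def by blast
  have "proper_edge_coloring E (n * m) (\<lambda>e. n * cls e + c (cls e) e)"
    unfolding proper_edge_coloring_def
  proof (intro conjI ballI impI)
    fix e assume e: "e \<in> E"
    have "n * cls e + c (cls e) e < n * cls e + n"
      using col[OF e] by simp
    also have "\<dots> \<le> n * m"
      using cls[OF e] by (metis Suc_leI mult_Suc_right mult_le_mono2 add.commute)
    finally show "n * cls e + c (cls e) e < n * m" .
  next
    fix e e' assume e: "e \<in> E" and e': "e' \<in> E" and meet: "e \<noteq> e' \<and> e \<inter> e' \<noteq> {}"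
    show "n * cls e + c (cls e) e \<noteq> n * cls e' + c (cls e') e'"
    proof
      assume eq: "n * cls e + c (cls e) e = n * cls e' + c (cls e') e'"
      have "cls e = cls e'"
        using arg_cong[OF eq, of "\<lambda>t. t div n"] col[OF e] col[OF e'] by simp
      moreover have "c (cls e) e = c (cls e') e'"
        using arg_cong[OF eq, of "\<lambda>t. t mod n"] col[OF e] col[OF e'] by simp
      ultimately show False
        using c cls[OF e] cls[OF e'] meet unfolding proper_edge_coloring_def by (metis lessThan_iff)
    qed
  qed
  then show ?thesis
    by blast
qed

lemma nat_ceiling_half: "nat \<lceil>real k / 2\<rceil> = (k + 1) div 2"
  by linarith

lemma one_plus_mult_half_le:
  fixes k :: nat
  assumes "2 \<le> k"
  shows "1 + k * ((k + 1) div 2) \<le> k\<^sup>2 - 1"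
proof (cases "k = 2")
  case False
  with assms have "3 \<le> k"
    by simp
  moreover from this have "3 * k \<le> k * k"
    by (rule mult_le_mono1)
  moreover have "2 * ((k + 1) div 2) \<le> k + 1"
    by presburger
  then have "k * (2 * ((k + 1) div 2)) \<le> k * (k + 1)"
    by (rule mult_le_mono2)
  then have "2 * (k * ((k + 1) div 2)) \<le> k * k + k"
    by (simp add: algebra_simps)
  ultimately show ?thesis
    unfolding power2_eq_square by linarith
qed simp

locale pencil_hypergraph =
  fixes V :: "'a set" and E :: "'a set set" and k :: nat and e0 :: "'a set"
  assumes two_le_k: "k \<ge> 2"
    and hypergraph: "hypergraph V E"
    and linear: "linear_hg E"
    and uniform: "uniform_hg k E"
    and card_V: "card V = k ^ 2"
    and card_E: "card E = k ^ 2 + 1"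
    and e0_in_E: "e0 \<in> E"
    and hdeg_e0: "\<forall>x\<in>e0. hdeg E x = k + 1"
    and hdeg_outside_ge: "\<forall>x\<in>V - e0. hdeg E x \<ge> k"
begin

lemma finite_E: "finite E"
  and edge_subset: "e \<in> E \<Longrightarrow> e \<subseteq> V"
  and finite_edge: "e \<in> E \<Longrightarrow> finite e"
  using hypergraph unfolding hypergraph_def by (auto intro: finite_subset)

lemma card_edge: "e \<in> E \<Longrightarrow> card e = k"
  using uniform unfolding uniform_hg_def by blast

lemmas edge_unique = linear_hg_edge_unique[OF hypergraph linear]

definition pencil :: "'a \<Rightarrow> 'a set set" where
  "pencil z = {e \<in> E. z \<in> e} - {e0}"

lemma card_pencil:
  assumes "z \<in> e0"
  shows "card (pencil z) = k"
  using hdeg_e0 assms e0_in_E unfolding pencil_def hdeg_def by (simp add: card_Diff_singleton)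

lemma pencil_unique:
  "z \<in> e0 \<Longrightarrow> z' \<in> e0 \<Longrightarrow> e \<in> pencil z \<Longrightarrow> e \<in> pencil z' \<Longrightarrow> z = z'"
  unfolding pencil_def using edge_unique[OF _ e0_in_E] by blast

lemma pencils_cover: "(\<Union>z\<in>e0. pencil z) = E - {e0}"
proof (rule card_subset_eq)
  show "(\<Union>z\<in>e0. pencil z) \<subseteq> E - {e0}"
    unfolding pencil_def by blast
  have "card (\<Union>z\<in>e0. pencil z) = (\<Sum>z\<in>e0. card (pencil z))"
    using finite_edge[OF e0_in_E] finite_E pencil_unique
    by (intro card_UN_disjoint) (auto simp: pencil_def)
  also have "\<dots> = k * k"
    using card_pencil card_edge[OF e0_in_E] by simp
  also have "\<dots> = card (E - {e0})"
    using card_E e0_in_E finite_E by (simp add: power2_eq_square)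
  finally show "card (\<Union>z\<in>e0. pencil z) = card (E - {e0})" .
qed (use finite_E in blast)

lemma edge_in_pencil:
  "e \<in> E \<Longrightarrow> e \<noteq> e0 \<Longrightarrow> \<exists>z\<in>e0. e \<in> pencil z"
  using pencils_cover by blast

text \<open>A vertex \<open>y\<close> outside \<open>e0\<close> lies on at least \<open>k\<close> edges, each meeting \<open>e0\<close> in a
  single point, and no two of them in the same point: so they hit every point of \<open>e0\<close> exactly once.\<close>

lemma edges_through_outside_vertex:
  assumes y: "y \<in> V - e0"
  obtains f where "bij_betw f {b \<in> E. y \<in> b} e0" and "\<And>b. b \<in> E \<Longrightarrow> y \<in> b \<Longrightarrow> b \<in> pencil (f b)"
proof -
  let ?Ey = "{b \<in> E. y \<in> b}"
  obtain f where f: "\<And>b. b \<in> ?Ey \<Longrightarrow> f b \<in> e0 \<and> b \<in> pencil (f b)"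
    using edge_in_pencil y by (metis (mono_tags, lifting) DiffD2 mem_Collect_eq)
  have "inj_on f ?Ey"
  proof (rule inj_onI)
    fix b b' assume "b \<in> ?Ey" "b' \<in> ?Ey" "f b = f b'"
    then show "b = b'"
      using f[of b] f[of b'] y edge_unique[of b b' "f b" y] unfolding pencil_def by auto
  qed
  moreover have "f ` ?Ey \<subseteq> e0"
    using f by blast
  moreover have "card e0 \<le> card ?Ey"
    using hdeg_outside_ge y card_edge[OF e0_in_E] unfolding hdeg_def by simp
  ultimately have "f ` ?Ey = e0"
    using finite_edge[OF e0_in_E] card_image
    by (metis card_mono card_seteq)
  with \<open>inj_on f ?Ey\<close> f that show ?thesis
    unfolding bij_betw_def by blast
qed

lemma hdeg_outside:
  assumes "y \<in> V - e0"
  shows "hdeg E y = k"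
  using edges_through_outside_vertex[OF assms] bij_betw_same_card card_edge[OF e0_in_E]
  unfolding hdeg_def by metis

lemma outside_vertex_in_pencil:
  assumes "y \<in> V - e0" "z \<in> e0"
  shows "\<exists>b\<in>pencil z. y \<in> b"
proof -
  obtain f where "bij_betw f {b \<in> E. y \<in> b} e0" "\<And>b. b \<in> E \<Longrightarrow> y \<in> b \<Longrightarrow> b \<in> pencil (f b)"
    using edges_through_outside_vertex[OF assms(1)] by blast
  then show ?thesis
    using assms(2) unfolding bij_betw_def by force
qed

text \<open>Each of the \<open>k - 1\<close> points of \<open>e\<close> off \<open>e0\<close> lies on exactly one edge of the pencil
  through \<open>z'\<close>, and each such edge meets \<open>e\<close> in exactly one point.\<close>

lemma card_pencil_meeting:
  assumes z: "z \<in> e0" and z': "z' \<in> e0" "z' \<noteq> z" and e: "e \<in> pencil z"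
  shows "card {b \<in> pencil z'. b \<inter> e \<noteq> {}} = k - 1"
proof -
  let ?M = "{b \<in> pencil z'. b \<inter> e \<noteq> {}}"
  have eE: "e \<in> E" "e \<noteq> e0" "z \<in> e"
    using e unfolding pencil_def by auto
  have z'_notin_e: "z' \<notin> e"
    using pencil_unique[OF z z'(1) e] z' eE unfolding pencil_def by blast
  have cover: "e - {z} = (\<Union>b\<in>?M. b \<inter> e)"
  proof
    show "e - {z} \<subseteq> (\<Union>b\<in>?M. b \<inter> e)"
    proof
      fix y assume y: "y \<in> e - {z}"
      then have "y \<in> V - e0"
        using edge_subset[OF eE(1)] edge_unique[OF eE(1) e0_in_E, of y z] eE z by blast
      then obtain b where "b \<in> pencil z'" "y \<in> b"
        using outside_vertex_in_pencil z' by blast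
      then show "y \<in> (\<Union>b\<in>?M. b \<inter> e)"
        using y by blast
    qed
    show "(\<Union>b\<in>?M. b \<inter> e) \<subseteq> e - {z}"
      using pencil_unique[OF z z'(1)] z' eE unfolding pencil_def by blast
  qed
  have "card (\<Union>b\<in>?M. b \<inter> e) = (\<Sum>b\<in>?M. card (b \<inter> e))"
  proof (rule card_UN_disjoint)
    show "\<forall>b\<in>?M. \<forall>b'\<in>?M. b \<noteq> b' \<longrightarrow> b \<inter> e \<inter> (b' \<inter> e) = {}"
    proof (intro ballI impI equals0I)
      fix b b' y assume "b \<in> ?M" "b' \<in> ?M" "b \<noteq> b'" "y \<in> b \<inter> e \<inter> (b' \<inter> e)"
      then show False
        using edge_unique[of b b' z' y] z'_notin_e unfolding pencil_def by auto
    qed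
  qed (use finite_E finite_edge[OF eE(1)] in \<open>auto simp: pencil_def\<close>)
  also have "\<dots> = (\<Sum>b\<in>?M. 1)"
    using linear_hg_card_Int[OF hypergraph linear _ eE(1)] z'_notin_e
    by (intro sum.cong) (auto simp: pencil_def)
  finally have "card ?M = card (e - {z})"
    using cover by simp
  then show ?thesis
    using card_edge[OF eE(1)] finite_edge[OF eE(1)] eE(3) by simp
qed

lemma unique_disjoint_in_pencil:
  assumes z: "z \<in> e0" and z': "z' \<in> e0" "z' \<noteq> z" and e: "e \<in> pencil z"
  shows "\<exists>!b. b \<in> pencil z' \<and> b \<inter> e = {}"
proof -
  let ?M = "{b \<in> pencil z'. b \<inter> e \<noteq> {}}"
  have "finite (pencil z')"
    using finite_E unfolding pencil_def by simp
  then have "card (pencil z' - ?M) = card (pencil z') - card ?M"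
    by (intro card_Diff_subset) auto
  then have "card (pencil z' - ?M) = 1"
    using card_pencil_meeting[OF assms] card_pencil[OF z'(1)] two_le_k by simp
  moreover have "pencil z' - ?M = {b \<in> pencil z'. b \<inter> e = {}}"
    by blast
  ultimately obtain b where "{b \<in> pencil z'. b \<inter> e = {}} = {b}"
    by (metis One_nat_def card_1_singleton_iff)
  then show ?thesis
    by (auto simp: set_eq_iff)
qed

definition opposite :: "'a \<Rightarrow> 'a set \<Rightarrow> 'a set" where
  "opposite z e = (THE b. b \<in> pencil z \<and> b \<inter> e = {})"

lemma opposite_in_pencil:
  assumes "z \<in> e0" "z' \<in> e0" "z \<noteq> z'" "e \<in> pencil z'"
  shows "opposite z e \<in> pencil z" and "opposite z e \<inter> e = {}"
  using theI'[OF unique_disjoint_in_pencil[OF assms(2,1,3) assms(4)]] unfolding opposite_def by auto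

lemma opposite_inj:
  assumes "z \<in> e0" "z' \<in> e0" "z \<noteq> z'" "e \<in> pencil z'" "e' \<in> pencil z'"
    and "opposite z e = opposite z e'"
  shows "e = e'"
proof -
  let ?b = "opposite z e"
  have "?b \<in> pencil z" "?b \<inter> e = {}" "?b \<inter> e' = {}"
    using opposite_in_pencil[OF assms(1-3)] assms(4-6) by metis+
  then show ?thesis
    using unique_disjoint_in_pencil[OF assms(1,2) not_sym[OF assms(3)]] assms(4,5) by blast
qed

lemma two_pencils_coloring:
  assumes z: "z \<in> e0" and z': "z' \<in> e0"
  obtains c where "proper_edge_coloring (pencil z \<union> pencil z') k c"
proof -
  obtain r where r: "bij_betw r (pencil z) {0..<k}"
    using ex_bij_betw_finite_nat[of "pencil z"] card_pencil[OF z] finite_E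
    unfolding pencil_def by auto
  define c where "c e = (if e \<in> pencil z then r e else r (opposite z e))" for e
  have c_in: "c e = r (opposite z e) \<and> opposite z e \<in> pencil z \<and> opposite z e \<inter> e = {}"
    if "e \<in> pencil z'" "e \<notin> pencil z" for e
    using that opposite_in_pencil[OF z z'] unfolding c_def by auto
  have "proper_edge_coloring (pencil z \<union> pencil z') k c"
    unfolding proper_edge_coloring_def
  proof (intro conjI ballI impI)
    fix e assume "e \<in> pencil z \<union> pencil z'"
    then have "c e \<in> r ` pencil z"
      using c_in unfolding c_def by auto
    then show "c e < k"
      using r unfolding bij_betw_def by auto
  next
    fix e e' assume e: "e \<in> pencil z \<union> pencil z'" and e': "e' \<in> pencil z \<union> pencil z'"
      and meet: "e \<noteq> e' \<and> e \<inter> e' \<noteq> {}"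
    have inj_r: "a \<in> pencil z \<Longrightarrow> a' \<in> pencil z \<Longrightarrow> r a = r a' \<Longrightarrow> a = a'" for a a'
      using r unfolding bij_betw_def inj_on_def by blast
    consider "e \<in> pencil z" "e' \<in> pencil z"
      | "e \<in> pencil z" "e' \<notin> pencil z" | "e \<notin> pencil z" "e' \<in> pencil z"
      | "e \<notin> pencil z" "e' \<notin> pencil z"
      by blast
    then show "c e \<noteq> c e'"
    proof cases
      case 1
      then show ?thesis
        using inj_r meet unfolding c_def by auto
    next
      case 2
      then show ?thesis
        using c_in[of e'] e' inj_r meet unfolding c_def by auto
    next
      case 3
      then show ?thesis
        using c_in[of e] e inj_r meet unfolding c_def by auto
    next
      case 4
      then have "z \<noteq> z'" "e \<in> pencil z'" "e' \<in> pencil z'"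
        using e e' by auto
      then show ?thesis
        using 4 c_in inj_r meet opposite_inj[OF z z'] by metis
    qed
  qed
  then show ?thesis
    using that by blast
qed

lemma proper_edge_coloring_exists:
  obtains c where "proper_edge_coloring E (1 + k * ((k + 1) div 2)) c"
proof -
  obtain g where g: "bij_betw g {0..<k} e0"
    using ex_bij_betw_nat_finite[OF finite_edge[OF e0_in_E]] card_edge[OF e0_in_E] by auto
  \<comment> \<open>pair the pencils up; for odd \<open>k\<close> the last pencil is paired with itself\<close>
  define F where "F i = pencil (g (2 * i)) \<union> pencil (g (min (2 * i + 1) (k - 1)))" for i
  have cover: "E - {e0} \<subseteq> (\<Union>i<(k + 1) div 2. F i)"
  proof
    fix e assume "e \<in> E - {e0}"
    then obtain z where "z \<in> e0" "e \<in> pencil z"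
      using pencils_cover by blast
    moreover from \<open>z \<in> e0\<close> obtain j where "j < k" "z = g j"
      using bij_betw_imp_surj_on[OF g] by force
    ultimately have j: "j < k" "e \<in> pencil (g j)"
      by simp_all
    then have "j = 2 * (j div 2) \<or> j = min (2 * (j div 2) + 1) (k - 1)"
      by presburger
    with j(2) have "e \<in> F (j div 2)"
      unfolding F_def by auto
    moreover have "j div 2 < (k + 1) div 2"
      using j(1) by presburger
    ultimately show "e \<in> (\<Union>i<(k + 1) div 2. F i)"
      by blast
  qed
  have "\<exists>c. proper_edge_coloring (F i) k c" if "i < (k + 1) div 2" for i
  proof -
    have "2 * i < k" "min (2 * i + 1) (k - 1) < k"
      using that two_le_k by auto
    then have "g (2 * i) \<in> e0" "g (min (2 * i + 1) (k - 1)) \<in> e0"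
      using bij_betwE[OF g] by simp_all
    then show ?thesis
      unfolding F_def by (metis two_pencils_coloring)
  qed
  with cover obtain c where "proper_edge_coloring (E - {e0}) (k * ((k + 1) div 2)) c"
    using proper_edge_coloring_UN by metis
  then show ?thesis
    by (rule that[unfolded plus_1_eq_Suc, OF proper_edge_coloring_insert])
qed

lemma chromatic_index_bounds:
  "k + 1 \<le> chromatic_index E" "chromatic_index E \<le> 1 + k * ((k + 1) div 2)"
proof -
  obtain c where c: "proper_edge_coloring E (1 + k * ((k + 1) div 2)) c"
    by (rule proper_edge_coloring_exists)
  obtain x where "x \<in> e0"
    using card_edge[OF e0_in_E] two_le_k by fastforce
  then show "k + 1 \<le> chromatic_index E"
    using hdeg_le_chromatic_index[OF c, of x] hdeg_e0 by simp
  show "chromatic_index E \<le> 1 + k * ((k + 1) div 2)"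
    using c by (rule chromatic_index_le)
qed

lemma sec2_deg_image: "sec2_deg V E ` V = {k\<^sup>2 - 1, k\<^sup>2 - k}"
proof -
  have deg_e0: "sec2_deg V E x = k\<^sup>2 - 1" if "x \<in> e0" for x
    using sec2_deg_linear_uniform[OF hypergraph linear uniform] hdeg_e0 that
    by (simp add: power2_eq_square algebra_simps)
  have deg_outside: "sec2_deg V E y = k\<^sup>2 - k" if "y \<in> V - e0" for y
    using sec2_deg_linear_uniform[OF hypergraph linear uniform] hdeg_outside[OF that]
    by (simp add: power2_eq_square algebra_simps)
  obtain x where x: "x \<in> e0"
    using card_edge[OF e0_in_E] two_le_k by fastforce
  obtain y where y: "y \<in> V - e0"
  proof -
    have "card e0 < card V"
      using card_edge[OF e0_in_E] card_V two_le_k by (simp add: power2_eq_square)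
    then have "\<not> V \<subseteq> e0"
      using card_mono[OF finite_edge[OF e0_in_E], of V] by linarith
    then show ?thesis
      using that by blast
  qed
  have "k\<^sup>2 - 1 \<in> sec2_deg V E ` V"
    using x edge_subset[OF e0_in_E] by (intro rev_image_eqI[of x]) (auto simp: deg_e0)
  moreover have "k\<^sup>2 - k \<in> sec2_deg V E ` V"
    using y by (intro rev_image_eqI[of y]) (auto simp: deg_outside)
  moreover have "sec2_deg V E ` V \<subseteq> {k\<^sup>2 - 1, k\<^sup>2 - k}"
    using deg_e0 deg_outside by blast
  ultimately show ?thesis
    by blast
qed

lemma sec2_maxdeg_mindeg: "sec2_maxdeg V E = k\<^sup>2 - 1" "sec2_mindeg V E = k\<^sup>2 - k"
  unfolding sec2_maxdeg_def sec2_mindeg_def sec2_deg_image using two_le_k by auto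

end

theorem theorem3p6:
  fixes V :: "'a set" and E :: "'a set set" and k :: nat and e0 :: "'a set"
  assumes "k \<ge> 2"
    and "hypergraph V E"
    and "linear_hg E"
    and "uniform_hg k E"
    and "card V = k ^ 2"
    and "card E = k ^ 2 + 1"
    and "e0 \<in> E"
    and "\<forall>x\<in>e0. hdeg E x = k + 1"
    and "\<forall>x\<in>V - e0. hdeg E x \<ge> k"
  shows "(sec2_maxdeg V E = k ^ 2 - 1 \<and> sec2_mindeg V E = k ^ 2 - k)
    \<and> (k + 1 \<le> chromatic_index E \<and> chromatic_index E \<le> 1 + k * nat (ceiling (real k / 2)))
    \<and> chromatic_index E \<le> sec2_maxdeg V E"
proof -
  interpret pencil_hypergraph V E k e0
    using assms by unfold_locales
  show ?thesis
    using sec2_maxdeg_mindeg chromatic_index_bounds one_plus_mult_half_le[OF two_le_k]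
    unfolding nat_ceiling_half by auto
qed

end
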